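(* Let $\Phi\in\mathbb R^{P\times N}$, $R$ proper lsc convex with $R_\infty(z)>0$ for all $z\in\ker(\Phi)\setminus\{0\}$, $\bar y\in\mathbb R^P$, and assume the solution set $\mathfrak D(0,\bar y)$ of $\mathcal D(0,\bar y)$ is nonempty. Let $(\lambda_k,y_k)$ be a sequence with $\lambda_k>0$ and $(\|y_k-\bar y\|/\lambda_k,\lambda_k)\to(0,0)$. Then $q^\star(\lambda_k,y_k)\to q^F(0,\bar y)$.
   Context: For $\lambda\ge0$, $y\in\mathbb R^P$, $\mathcal D(\lambda,y)$ is the problem $\max_{q\in\mathbb R^P}\langle q,y\rangle-\frac\lambda2\|q\|^2-R^*(\Phi^*q)$ (Fenchel–Rockafellar dual of $\min_x R(x)+\frac1{2\lambda}\|y-\Phi x\|^2$ for $\lambda>0$, resp. of $\min_x R(x)$ s.t. $\Phi x=y$ for $\lambda=0$), $R^*$ the Fenchel conjugate; $\mathfrak D(\lambda,y)$ is its solution set. For $\lambda>0$ it has a unique solution $q^\star(\lambda,y)$. $q^F(0,y)$ is the minimum-norm element of the closed convex set $\mathfrak D(0,y)$. $R_\infty$ is the recession function $R_\infty(z)=\lim_{t\to+\infty}(R(x+tz)-R(x))/t$, $x\in\mathrm{dom}R$. *)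

theory Defs
  imports "HOL-Analysis.Analysis"
begin

definition proper_fun :: "('a \<Rightarrow> ereal) \<Rightarrow> bool" where
  "proper_fun R \<longleftrightarrow> (\<forall>x. R x \<noteq> -\<infinity>) \<and> (\<exists>x. R x \<noteq> \<infinity>)"

definition lsc_fun :: "('a::topological_space \<Rightarrow> ereal) \<Rightarrow> bool" where
  "lsc_fun R \<longleftrightarrow> (\<forall>x. R x \<le> Liminf (at x) R)"

definition convex_fun :: "('a::real_vector \<Rightarrow> ereal) \<Rightarrow> bool" where
  "convex_fun R \<longleftrightarrow> (\<forall>x y (t::real). 0 \<le> t \<and> t \<le> 1 \<longrightarrow>
      R ((1 - t) *\<^sub>R x + t *\<^sub>R y) \<le> ereal (1 - t) * R x + ereal t * R y)"

definition dom_fun :: "('a \<Rightarrow> ereal) \<Rightarrow> 'a set" where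
  "dom_fun R = {x. R x < \<infinity>}"

definition fenchel_conj :: "('a::real_inner \<Rightarrow> ereal) \<Rightarrow> 'a \<Rightarrow> ereal" where
  "fenchel_conj R w = (SUP x. ereal (w \<bullet> x) - R x)"

text \<open>Recession function: limit of the difference quotients at a point of the domain
  (independent of the chosen point for proper lsc convex R).\<close>
definition recession_fun :: "('a::real_vector \<Rightarrow> ereal) \<Rightarrow> 'a \<Rightarrow> ereal" where
  "recession_fun R z =
     (let x0 = (SOME x. x \<in> dom_fun R) in
      Lim at_top (\<lambda>t::real. (R (x0 + t *\<^sub>R z) - R x0) / ereal t))"

definition dual_obj ::
  "real^'n^'p \<Rightarrow> (real^'n \<Rightarrow> ereal) \<Rightarrow> real \<Rightarrow> real^'p \<Rightarrow> real^'p \<Rightarrow> ereal" where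
  "dual_obj Phi R lam y q =
     ereal (q \<bullet> y - lam / 2 * (norm q)\<^sup>2) - fenchel_conj R (transpose Phi *v q)"

definition dual_sol ::
  "real^'n^'p \<Rightarrow> (real^'n \<Rightarrow> ereal) \<Rightarrow> real \<Rightarrow> real^'p \<Rightarrow> (real^'p) set" where
  "dual_sol Phi R lam y =
     {q. dual_obj Phi R lam y q \<noteq> -\<infinity> \<and> (\<forall>q'. dual_obj Phi R lam y q' \<le> dual_obj Phi R lam y q)}"

text \<open>q*(lambda,y): the unique solution for lambda > 0.\<close>
definition q_star :: "real^'n^'p \<Rightarrow> (real^'n \<Rightarrow> ereal) \<Rightarrow> real \<Rightarrow> real^'p \<Rightarrow> real^'p" where
  "q_star Phi R lam y = (THE q. q \<in> dual_sol Phi R lam y)"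

definition q_F :: "real^'n^'p \<Rightarrow> (real^'n \<Rightarrow> ereal) \<Rightarrow> real^'p \<Rightarrow> real^'p" where
  "q_F Phi R y = (THE q. q \<in> dual_sol Phi R 0 y \<and>
                        (\<forall>q'\<in>dual_sol Phi R 0 y. norm q \<le> norm q'))"

end

theory Submission
  imports Defs
begin

text \<open>
  Write \<open>F q = R\<^sup>*(\<Phi>\<^sup>T q)\<close>; as a supremum of affine functions of \<open>q\<close> it is convex and
  closed. For \<open>\<lambda> > 0\<close> the dual objective \<open>\<langle>q,y\<rangle> - \<lambda>/2 \<parallel>q\<parallel>\<^sup>2 - F q\<close> is strongly
  concave, so it has exactly one maximiser \<open>q\<^sub>k = q\<^sup>\<star>(\<lambda>\<^sub>k,y\<^sub>k)\<close>. Testing the optimality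
  of \<open>q\<^sub>k\<close> against any solution \<open>p\<close> of \<open>D(0,ybar)\<close>, and that of \<open>p\<close> against \<open>q\<^sub>k\<close>, gives
  \<open>\<parallel>q\<^sub>k\<parallel>\<^sup>2 \<le> \<parallel>p\<parallel>\<^sup>2 + 2 (\<parallel>y\<^sub>k - ybar\<parallel>/\<lambda>\<^sub>k) \<parallel>q\<^sub>k - p\<parallel>\<close>.
  Hence \<open>(q\<^sub>k)\<close> is bounded and each of its cluster points has norm at most \<open>\<parallel>p\<parallel>\<close>.
  Since the solution map has closed graph, every cluster point also solves \<open>D(0,ybar)\<close>,
  so it is the minimum-norm solution \<open>q\<^sup>F(0,ybar)\<close>.
\<close>

lemma power2_norm_midpoint:
  fixes a b :: "'a::real_inner"
  shows "(norm (midpoint a b))\<^sup>2 = ((norm a)\<^sup>2 + (norm b)\<^sup>2) / 2 - (norm (a - b))\<^sup>2 / 4"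
  unfolding power2_norm_eq_inner midpoint_def
  by (simp add: inner_add_left inner_add_right inner_diff_left inner_diff_right inner_commute
      field_simps)

lemma min_norm_unique:
  fixes S :: "'a::real_inner set"
  assumes "\<And>a b. a \<in> S \<Longrightarrow> b \<in> S \<Longrightarrow> midpoint a b \<in> S"
    and "a \<in> S" "\<forall>p\<in>S. norm a \<le> norm p" "b \<in> S" "\<forall>p\<in>S. norm b \<le> norm p"
  shows "a = b"
proof -
  have "norm a = norm b" using assms by force
  moreover have "norm a \<le> norm (midpoint a b)" using assms by blast
  then have "(norm a)\<^sup>2 \<le> (norm (midpoint a b))\<^sup>2" by (simp add: power_mono)
  ultimately have "(norm (a - b))\<^sup>2 \<le> 0" unfolding power2_norm_midpoint by simp
  then show ?thesis by simp
qed

lemma Cauchy_if_midpoint_gap: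
  fixes X :: "nat \<Rightarrow> 'a::real_normed_vector" and v :: "nat \<Rightarrow> real"
  assumes "\<mu> > 0" "v \<longlonglongrightarrow> M" "\<And>i j. (v i + v j) / 2 + \<mu> * (norm (X i - X j))\<^sup>2 \<le> M"
  shows "Cauchy X"
proof (rule CauchyI)
  fix e :: real assume "e > 0"
  then have "\<mu> * e\<^sup>2 > 0" using assms(1) by simp
  with assms(2) obtain N where N: "\<And>n. n \<ge> N \<Longrightarrow> \<bar>v n - M\<bar> < \<mu> * e\<^sup>2"
    unfolding LIMSEQ_def dist_real_def by blast
  show "\<exists>N. \<forall>m\<ge>N. \<forall>n\<ge>N. norm (X m - X n) < e"
  proof (intro exI allI impI)
    fix m n assume "N \<le> m" "N \<le> n"
    have "\<mu> * (norm (X m - X n))\<^sup>2 \<le> M - (v m + v n) / 2" using assms(3)[of m n] by linarith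
    also have "\<dots> < \<mu> * e\<^sup>2" using N[of m] N[of n] \<open>N \<le> m\<close> \<open>N \<le> n\<close> by (simp add: abs_less_iff) argo
    finally have "\<mu> * (norm (X m - X n))\<^sup>2 < \<mu> * e\<^sup>2" .
    then have "(norm (X m - X n))\<^sup>2 < e\<^sup>2" using assms(1) by simp
    then show "norm (X m - X n) < e" using \<open>e > 0\<close> by (simp add: power_less_imp_less_base)
  qed
qed

lemma tendsto_unique_limit_point:
  fixes q :: "nat \<Rightarrow> 'a::heine_borel"
  assumes "bounded (range q)" and limit_point: "\<And>r l. strict_mono r \<Longrightarrow> (q \<circ> r) \<longlonglongrightarrow> l \<Longrightarrow> l = L"
  shows "q \<longlonglongrightarrow> L"
proof (rule ccontr)
  assume "\<not> q \<longlonglongrightarrow> L"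
  then obtain e where "e > 0" "\<forall>N. \<exists>n\<ge>N. e \<le> dist (q n) L"
    unfolding LIMSEQ_def by (meson not_less)
  then have "infinite {n. e \<le> dist (q n) L}"
    unfolding infinite_nat_iff_unbounded_le by blast
  then obtain r :: "nat \<Rightarrow> nat" where r: "strict_mono r" "\<And>n. e \<le> dist (q (r n)) L"
    using infinite_enumerate by blast
  have "bounded (range (q \<circ> r))"
    using assms(1) by (rule bounded_subset) auto
  then obtain s l where s: "strict_mono s" "(q \<circ> r \<circ> s) \<longlonglongrightarrow> l"
    using bounded_imp_convergent_subsequence by blast
  have "l = L" using limit_point[of "r \<circ> s" l] s r(1) by (simp add: strict_mono_o o_assoc)
  moreover have "e \<le> dist l L"
    by (rule LIMSEQ_le_const[OF tendsto_dist[OF s(2) tendsto_const]]) (use r(2) in auto)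
  ultimately show False using \<open>e > 0\<close> by simp
qed

lemma tendsto_if_norm_diff_div_tendsto_zero:
  fixes y :: "nat \<Rightarrow> 'a::real_normed_vector"
  assumes "\<And>k. lam k \<noteq> 0" "(\<lambda>k. norm (y k - y0) / lam k) \<longlonglongrightarrow> 0" "lam \<longlonglongrightarrow> 0"
  shows "y \<longlonglongrightarrow> y0"
proof -
  have "(\<lambda>k. norm (y k - y0) / lam k * lam k) \<longlonglongrightarrow> 0 * 0"
    using assms(2,3) by (rule tendsto_mult)
  then have "(\<lambda>k. norm (y k - y0)) \<longlonglongrightarrow> 0" using assms(1) by simp
  then show ?thesis by (simp add: LIM_zero_cancel tendsto_norm_zero_iff)
qed

lemma fenchel_conj_ge:
  assumes "R x = ereal r"
  shows "ereal (w \<bullet> x - r) \<le> fenchel_conj R w"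
proof -
  have "ereal (w \<bullet> x - r) = ereal (w \<bullet> x) - R x" using assms by simp
  also have "\<dots> \<le> fenchel_conj R w" unfolding fenchel_conj_def by (rule SUP_upper) simp
  finally show ?thesis .
qed

lemma fenchel_conj_le:
  assumes "proper_fun R" "\<And>x r. R x = ereal r \<Longrightarrow> w \<bullet> x - r \<le> c"
  shows "fenchel_conj R w \<le> ereal c"
  unfolding fenchel_conj_def
proof (rule SUP_least)
  fix x show "ereal (w \<bullet> x) - R x \<le> ereal c"
    using assms unfolding proper_fun_def by (cases "R x") auto
qed

lemma fenchel_conj_le_iff:
  assumes "proper_fun R"
  shows "fenchel_conj R w \<le> ereal c \<longleftrightarrow> (\<forall>x r. R x = ereal r \<longrightarrow> w \<bullet> x - r \<le> c)"
  using fenchel_conj_le[OF assms] fenchel_conj_ge order_trans ereal_less_eq(3) by metis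

lemma fenchel_conj_not_MInf:
  assumes "proper_fun R"
  shows "fenchel_conj R w \<noteq> -\<infinity>"
proof -
  obtain x r where "R x = ereal r"
    using assms unfolding proper_fun_def by (metis ereal_cases)
  from fenchel_conj_ge[of R x r w, OF this] show ?thesis by auto
qed

lemma fenchel_conj_midpoint:
  assumes "proper_fun R" "fenchel_conj R v \<le> ereal a" "fenchel_conj R w \<le> ereal b"
  shows "fenchel_conj R (midpoint v w) \<le> ereal ((a + b) / 2)"
  using assms unfolding fenchel_conj_le_iff[OF assms(1)] midpoint_def
  by (fastforce simp: inner_add_left field_simps)

lemma fenchel_conj_closed_sublevel:
  assumes "proper_fun R" "w \<longlonglongrightarrow> w0" "c \<longlonglongrightarrow> c0" "\<And>j. fenchel_conj R (w j) \<le> ereal (c j)"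
  shows "fenchel_conj R w0 \<le> ereal c0"
  unfolding fenchel_conj_le_iff[OF assms(1)]
proof (intro allI impI)
  fix x r assume "R x = ereal r"
  then have "w j \<bullet> x - r \<le> c j" for j using assms(4) fenchel_conj_le_iff[OF assms(1)] by blast
  moreover have "(\<lambda>j. w j \<bullet> x - r) \<longlonglongrightarrow> w0 \<bullet> x - r" by (intro tendsto_intros assms(2))
  ultimately show "w0 \<bullet> x - r \<le> c0" using assms(3) by (intro LIMSEQ_le) auto
qed

definition dual_dom :: "real^'n^'p \<Rightarrow> (real^'n \<Rightarrow> ereal) \<Rightarrow> (real^'p) set" where
  "dual_dom Phi R = {q. fenchel_conj R (transpose Phi *v q) \<noteq> \<infinity>}"

text \<open>\<open>dual_pen\<close> is a junk value outside \<open>dual_dom\<close>, where \<open>dual_obj\<close> is \<open>-\<infinity>\<close>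
  (see \<open>dual_obj_eq\<close>).\<close>

definition dual_pen :: "real^'n^'p \<Rightarrow> (real^'n \<Rightarrow> ereal) \<Rightarrow> real^'p \<Rightarrow> real" where
  "dual_pen Phi R q = real_of_ereal (fenchel_conj R (transpose Phi *v q))"

definition dual_val ::
  "real^'n^'p \<Rightarrow> (real^'n \<Rightarrow> ereal) \<Rightarrow> real \<Rightarrow> real^'p \<Rightarrow> real^'p \<Rightarrow> real" where
  "dual_val Phi R lam y q = q \<bullet> y - lam / 2 * (norm q)\<^sup>2 - dual_pen Phi R q"

context
  fixes Phi :: "real^'n^'p" and R :: "real^'n \<Rightarrow> ereal"
  assumes proper: "proper_fun R"
begin

lemma dual_pen_le_iff:
  "q \<in> dual_dom Phi R \<and> dual_pen Phi R q \<le> c \<longleftrightarrow> fenchel_conj R (transpose Phi *v q) \<le> ereal c"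
  using fenchel_conj_not_MInf[OF proper, of "transpose Phi *v q"]
  unfolding dual_dom_def dual_pen_def by (cases "fenchel_conj R (transpose Phi *v q)") auto

lemma dual_obj_eq:
  "dual_obj Phi R lam y q = (if q \<in> dual_dom Phi R then ereal (dual_val Phi R lam y q) else -\<infinity>)"
  using fenchel_conj_not_MInf[OF proper, of "transpose Phi *v q"]
  unfolding dual_obj_def dual_dom_def dual_val_def dual_pen_def
  by (cases "fenchel_conj R (transpose Phi *v q)") auto

lemma mem_dual_sol_iff:
  "q \<in> dual_sol Phi R lam y \<longleftrightarrow>
     q \<in> dual_dom Phi R \<and> (\<forall>q'\<in>dual_dom Phi R. dual_val Phi R lam y q' \<le> dual_val Phi R lam y q)"
  unfolding dual_sol_def dual_obj_eq by (fastforce split: if_splits)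

lemma dual_pen_midpoint:
  assumes "a \<in> dual_dom Phi R" "b \<in> dual_dom Phi R"
  shows "midpoint a b \<in> dual_dom Phi R \<and>
    dual_pen Phi R (midpoint a b) \<le> (dual_pen Phi R a + dual_pen Phi R b) / 2"
proof -
  have "fenchel_conj R (transpose Phi *v a) \<le> ereal (dual_pen Phi R a)"
    and "fenchel_conj R (transpose Phi *v b) \<le> ereal (dual_pen Phi R b)"
    using assms dual_pen_le_iff by blast+
  then have "fenchel_conj R (midpoint (transpose Phi *v a) (transpose Phi *v b))
      \<le> ereal ((dual_pen Phi R a + dual_pen Phi R b) / 2)"
    by (rule fenchel_conj_midpoint[OF proper])
  then show ?thesis
    unfolding dual_pen_le_iff midpoint_linear_image[OF matrix_vector_mul_linear] .
qed

lemma dual_pen_closed_sublevel: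
  assumes "X \<longlonglongrightarrow> q0" "c \<longlonglongrightarrow> c0" "\<And>j. X j \<in> dual_dom Phi R \<and> dual_pen Phi R (X j) \<le> c j"
  shows "q0 \<in> dual_dom Phi R \<and> dual_pen Phi R q0 \<le> c0"
proof -
  have "(\<lambda>j. transpose Phi *v X j) \<longlonglongrightarrow> transpose Phi *v q0"
    using assms(1) by (rule isCont_tendsto_compose[OF matrix_vector_mult_linear_continuous_at])
  then show ?thesis
    using assms fenchel_conj_closed_sublevel[OF proper] dual_pen_le_iff by metis
qed

lemma dual_val_midpoint:
  assumes "a \<in> dual_dom Phi R" "b \<in> dual_dom Phi R" "lam \<ge> 0"
  shows "(dual_val Phi R lam y a + dual_val Phi R lam y b) / 2 + lam / 8 * (norm (a - b))\<^sup>2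
    \<le> dual_val Phi R lam y (midpoint a b)"
proof -
  have "dual_pen Phi R (midpoint a b) \<le> (dual_pen Phi R a + dual_pen Phi R b) / 2"
    using dual_pen_midpoint[OF assms(1,2)] by blast
  moreover have "midpoint a b \<bullet> y = (a \<bullet> y + b \<bullet> y) / 2"
    by (simp add: midpoint_def inner_add_left)
  ultimately show ?thesis
    unfolding dual_val_def power2_norm_midpoint by (simp add: field_simps)
qed

lemma dual_val_upper_semicontinuous:
  assumes "\<And>j. X j \<in> dual_dom Phi R" "X \<longlonglongrightarrow> q0" "lam \<longlonglongrightarrow> lam0" "y \<longlonglongrightarrow> y0" "b \<longlonglongrightarrow> b0"
    "\<And>j. b j \<le> dual_val Phi R (lam j) (y j) (X j)"
  shows "q0 \<in> dual_dom Phi R \<and> b0 \<le> dual_val Phi R lam0 y0 q0"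
proof -
  define c where "c j = X j \<bullet> y j - lam j / 2 * (norm (X j))\<^sup>2 - b j" for j
  have "c \<longlonglongrightarrow> q0 \<bullet> y0 - lam0 / 2 * (norm q0)\<^sup>2 - b0"
    unfolding c_def using assms(2-5) by (auto intro!: tendsto_intros)
  moreover have "X j \<in> dual_dom Phi R \<and> dual_pen Phi R (X j) \<le> c j" for j
    using assms(1,6)[of j] unfolding c_def dual_val_def by simp
  ultimately show ?thesis
    using dual_pen_closed_sublevel[OF assms(2)] unfolding dual_val_def by fastforce
qed

lemma dual_sol_unique:
  assumes "lam > 0" "a \<in> dual_sol Phi R lam y" "b \<in> dual_sol Phi R lam y"
  shows "a = b"
proof -
  have "a \<in> dual_dom Phi R" "b \<in> dual_dom Phi R"
    and "dual_val Phi R lam y a = dual_val Phi R lam y b"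
    and "dual_val Phi R lam y (midpoint a b) \<le> dual_val Phi R lam y a"
    using assms(2,3) dual_pen_midpoint unfolding mem_dual_sol_iff by (meson order_antisym)+
  with dual_val_midpoint[of a b lam y] assms(1) have "lam / 8 * (norm (a - b))\<^sup>2 \<le> 0" by simp
  with assms(1) show ?thesis by (simp add: mult_le_0_iff)
qed

lemma midpoint_mem_dual_sol:
  assumes "lam \<ge> 0" "a \<in> dual_sol Phi R lam y" "b \<in> dual_sol Phi R lam y"
  shows "midpoint a b \<in> dual_sol Phi R lam y"
proof -
  have a: "a \<in> dual_dom Phi R" and b: "b \<in> dual_dom Phi R"
    and "dual_val Phi R lam y a = dual_val Phi R lam y b"
    using assms(2,3) unfolding mem_dual_sol_iff by (meson order_antisym)+
  moreover have "0 \<le> lam / 8 * (norm (a - b))\<^sup>2" using assms(1) by simp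
  ultimately have "dual_val Phi R lam y a \<le> dual_val Phi R lam y (midpoint a b)"
    using dual_val_midpoint[OF a b assms(1), of y] by argo
  then show ?thesis
    using assms(2) dual_pen_midpoint[OF a b] unfolding mem_dual_sol_iff by fastforce
qed

lemma dual_val_bdd_above:
  assumes "lam > 0"
  shows "bdd_above (dual_val Phi R lam y ` dual_dom Phi R)"
proof -
  obtain x0 r0 where x0: "R x0 = ereal r0"
    using proper unfolding proper_fun_def by (metis ereal_cases)
  define v where "v = y - Phi *v x0"
  have "dual_val Phi R lam y q \<le> (norm v)\<^sup>2 / (2 * lam) + r0" if "q \<in> dual_dom Phi R" for q
  proof -
    have "q \<bullet> (Phi *v x0) - r0 \<le> dual_pen Phi R q"
      using that x0 fenchel_conj_le_iff[OF proper] dual_pen_le_iff[of q "dual_pen Phi R q"]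
      by (simp add: dot_lmul_matrix)
    then have "dual_val Phi R lam y q \<le> q \<bullet> v - lam / 2 * (norm q)\<^sup>2 + r0"
      unfolding dual_val_def v_def by (simp add: inner_diff_right)
    also have "\<dots> \<le> norm q * norm v - lam / 2 * (norm q)\<^sup>2 + r0"
      using norm_cauchy_schwarz by simp
    also have "\<dots> = (norm v)\<^sup>2 / (2 * lam) + r0 - (norm v - lam * norm q)\<^sup>2 / (2 * lam)"
      using assms by (simp add: field_simps power2_eq_square)
    also have "\<dots> \<le> (norm v)\<^sup>2 / (2 * lam) + r0" using assms by simp
    finally show ?thesis .
  qed
  then show ?thesis by (intro bdd_aboveI) blast
qed

lemma dual_sol_exists:
  assumes "lam > 0" "dual_dom Phi R \<noteq> {}"
  obtains q where "q \<in> dual_sol Phi R lam y"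
proof -
  let ?v = "dual_val Phi R lam y"
  define M where "M = Sup (?v ` dual_dom Phi R)"
  have upper: "?v q \<le> M" if "q \<in> dual_dom Phi R" for q
    unfolding M_def using that dual_val_bdd_above[OF assms(1)] by (auto intro: cSup_upper)
  have "\<exists>q\<in>dual_dom Phi R. M - inverse (real (Suc j)) < ?v q" for j
  proof -
    have "M - inverse (real (Suc j)) < Sup (?v ` dual_dom Phi R)" unfolding M_def by simp
    then show ?thesis
      using less_cSup_iff[OF _ dual_val_bdd_above[OF assms(1)]] assms(2) by blast
  qed
  then obtain X where X: "\<And>j. X j \<in> dual_dom Phi R" "\<And>j. M - inverse (real (Suc j)) < ?v (X j)"
    by metis
  have lower: "(\<lambda>j. M - inverse (real (Suc j))) \<longlonglongrightarrow> M"
    using tendsto_diff[OF tendsto_const LIMSEQ_inverse_real_of_nat, of M] by simp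
  have vX: "(\<lambda>j. ?v (X j)) \<longlonglongrightarrow> M"
    using X upper
    by (intro real_tendsto_sandwich[OF _ _ lower tendsto_const] always_eventually allI)
      (auto intro: less_imp_le)
  have "Cauchy X"
  proof (rule Cauchy_if_midpoint_gap[OF _ vX])
    fix i j
    have "midpoint (X i) (X j) \<in> dual_dom Phi R" using dual_pen_midpoint[OF X(1) X(1)] by blast
    then show "(?v (X i) + ?v (X j)) / 2 + lam / 8 * (norm (X i - X j))\<^sup>2 \<le> M"
      using dual_val_midpoint[OF X(1)[of i] X(1)[of j], of lam y] upper assms(1)
      by (meson less_imp_le order_trans)
  qed (use assms(1) in simp)
  then obtain q0 where "X \<longlonglongrightarrow> q0" unfolding Cauchy_convergent_iff convergent_def by blast
  then have "q0 \<in> dual_dom Phi R \<and> M \<le> ?v q0"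
    by (rule dual_val_upper_semicontinuous[OF X(1) _ tendsto_const tendsto_const vX order_refl])
  then have "q0 \<in> dual_sol Phi R lam y" unfolding mem_dual_sol_iff using upper by force
  then show thesis by (rule that)
qed

lemma dual_sol_closed_graph:
  assumes "\<And>j. q j \<in> dual_sol Phi R (lam j) (y j)"
    "q \<longlonglongrightarrow> l" "lam \<longlonglongrightarrow> lam0" "y \<longlonglongrightarrow> y0"
  shows "l \<in> dual_sol Phi R lam0 y0"
proof -
  have "l \<in> dual_dom Phi R \<and> dual_val Phi R lam0 y0 q' \<le> dual_val Phi R lam0 y0 l"
    if "q' \<in> dual_dom Phi R" for q'
  proof (rule dual_val_upper_semicontinuous[OF _ assms(2-4)])
    show "(\<lambda>j. dual_val Phi R (lam j) (y j) q') \<longlonglongrightarrow> dual_val Phi R lam0 y0 q'"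
      unfolding dual_val_def using assms(3,4) by (auto intro!: tendsto_intros)
  qed (use assms(1) that in \<open>auto simp: mem_dual_sol_iff\<close>)
  moreover have "q 0 \<in> dual_dom Phi R" using assms(1) mem_dual_sol_iff by blast
  ultimately show ?thesis unfolding mem_dual_sol_iff by blast
qed

lemma dual_sol_norm_le:
  assumes "lam > 0" "q \<in> dual_sol Phi R lam y" "p \<in> dual_sol Phi R 0 y0"
  shows "(norm q)\<^sup>2 \<le> (norm p)\<^sup>2 + 2 * (norm (y - y0) / lam) * norm (q - p)"
proof -
  have "dual_val Phi R lam y p \<le> dual_val Phi R lam y q"
    and "dual_val Phi R 0 y0 q \<le> dual_val Phi R 0 y0 p"
    using assms(2,3) unfolding mem_dual_sol_iff by blast+
  then have "lam / 2 * ((norm q)\<^sup>2 - (norm p)\<^sup>2) \<le> (q - p) \<bullet> (y - y0)"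
    unfolding dual_val_def by (simp add: inner_diff_left inner_diff_right algebra_simps)
  also have "\<dots> \<le> norm (q - p) * norm (y - y0)" by (rule norm_cauchy_schwarz)
  finally show ?thesis using assms(1) by (simp add: field_simps)
qed

lemma dual_sol_norm_bound:
  assumes "lam > 0" "q \<in> dual_sol Phi R lam y" "p \<in> dual_sol Phi R 0 y0"
  shows "norm q \<le> norm p + 2 * (norm (y - y0) / lam)"
proof -
  define e where "e = norm (y - y0) / lam"
  have "e \<ge> 0" unfolding e_def using assms(1) by simp
  then have "(norm q)\<^sup>2 \<le> (norm p)\<^sup>2 + 2 * e * (norm q + norm p)"
    using dual_sol_norm_le[OF assms] norm_triangle_ineq4[of q p] unfolding e_def[symmetric]
    by (smt (verit, best) mult_left_mono)
  then have "(norm q - e)\<^sup>2 \<le> (norm p + e)\<^sup>2" by (simp add: power2_eq_square algebra_simps)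
  then have "norm q - e \<le> norm p + e" by (rule power2_le_imp_le) (use \<open>e \<ge> 0\<close> in simp)
  then show ?thesis unfolding e_def by simp
qed

end

lemma q_star_mem_dual_sol:
  assumes "proper_fun R" "lam > 0" "dual_dom Phi R \<noteq> {}"
  shows "q_star Phi R lam y \<in> dual_sol Phi R lam y"
proof -
  obtain q where "q \<in> dual_sol Phi R lam y" using dual_sol_exists[OF assms] .
  then have "\<exists>!q. q \<in> dual_sol Phi R lam y" using dual_sol_unique[OF assms(1,2)] by blast
  then show ?thesis unfolding q_star_def by (rule theI')
qed

lemma q_F_eqI:
  assumes "proper_fun R" "l \<in> dual_sol Phi R 0 y" "\<forall>p\<in>dual_sol Phi R 0 y. norm l \<le> norm p"
  shows "q_F Phi R y = l"
  unfolding q_F_def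
proof (rule the_equality)
  fix q assume "q \<in> dual_sol Phi R 0 y \<and> (\<forall>p\<in>dual_sol Phi R 0 y. norm q \<le> norm p)"
  then show "q = l"
    using min_norm_unique[OF midpoint_mem_dual_sol[OF assms(1) order_refl]] assms(2,3) by blast
qed (use assms(2,3) in blast)

lemma dual_sol_limit_eq_q_F:
  assumes "proper_fun R" "\<And>j. q j \<in> dual_sol Phi R (lam j) (y j)" "\<And>j. lam j > 0"
    "(\<lambda>j. norm (y j - y0) / lam j) \<longlonglongrightarrow> 0" "lam \<longlonglongrightarrow> 0" "q \<longlonglongrightarrow> l"
  shows "q_F Phi R y0 = l"
proof (rule q_F_eqI[OF assms(1)])
  have "lam j \<noteq> 0" for j using assms(3)[of j] by simp
  then have "y \<longlonglongrightarrow> y0" using assms(4,5) by (rule tendsto_if_norm_diff_div_tendsto_zero)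
  then show "l \<in> dual_sol Phi R 0 y0"
    by (rule dual_sol_closed_graph[OF assms(1,2,6,5)])
  show "\<forall>p\<in>dual_sol Phi R 0 y0. norm l \<le> norm p"
  proof
    fix p assume p: "p \<in> dual_sol Phi R 0 y0"
    have "(\<lambda>j. (norm (q j))\<^sup>2) \<longlonglongrightarrow> (norm l)\<^sup>2"
      by (intro tendsto_intros assms(6))
    moreover have "(\<lambda>j. (norm p)\<^sup>2 + 2 * (norm (y j - y0) / lam j) * norm (q j - p))
        \<longlonglongrightarrow> (norm p)\<^sup>2 + 2 * 0 * norm (l - p)"
      by (intro tendsto_add tendsto_mult tendsto_const tendsto_norm tendsto_diff assms(4,6))
    ultimately have "(norm l)\<^sup>2 \<le> (norm p)\<^sup>2 + 2 * 0 * norm (l - p)"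
      by (rule LIMSEQ_le) (use dual_sol_norm_le[OF assms(1,3,2) p] in auto)
    then have "(norm l)\<^sup>2 \<le> (norm p)\<^sup>2" by simp
    then show "norm l \<le> norm p" by (rule power2_le_imp_le) simp
  qed
qed

theorem lemma4p2:
  fixes Phi :: "real^'n^'p" and R :: "real^'n \<Rightarrow> ereal"
    and ybar :: "real^'p" and lam :: "nat \<Rightarrow> real" and y :: "nat \<Rightarrow> real^'p"
  assumes "proper_fun R" and "lsc_fun R" and "convex_fun R"
    and "\<forall>z. Phi *v z = 0 \<and> z \<noteq> 0 \<longrightarrow> recession_fun R z > 0"
    and "dual_sol Phi R 0 ybar \<noteq> {}"
    and "\<forall>k. lam k > 0"
    and "(\<lambda>k. norm (y k - ybar) / lam k) \<longlonglongrightarrow> 0"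
    and "lam \<longlonglongrightarrow> 0"
  shows "(\<lambda>k. q_star Phi R (lam k) (y k)) \<longlonglongrightarrow> q_F Phi R ybar"
proof (rule tendsto_unique_limit_point)
  obtain p where p: "p \<in> dual_sol Phi R 0 ybar" using assms(5) by blast
  then have "p \<in> dual_dom Phi R" by (simp add: mem_dual_sol_iff[OF assms(1)])
  then have sol: "q_star Phi R (lam k) (y k) \<in> dual_sol Phi R (lam k) (y k)" for k
    using q_star_mem_dual_sol[OF assms(1)] assms(6) by blast
  have "Bseq (\<lambda>k. norm (y k - ybar) / lam k)"
    using assms(7) by (intro convergent_imp_Bseq convergentI)
  then obtain K where "\<And>k. norm (norm (y k - ybar) / lam k) \<le> K" by (meson BseqE)
  then have "norm (y k - ybar) / lam k \<le> K" for k by (metis abs_le_D1 real_norm_def)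
  then have "norm (q_star Phi R (lam k) (y k)) \<le> norm p + 2 * K" for k
    using dual_sol_norm_bound[OF assms(1) _ sol[of k] p] assms(6) by (smt (verit))
  then show "bounded (range (\<lambda>k. q_star Phi R (lam k) (y k)))"
    unfolding bounded_iff by blast
  fix r l
  assume r: "strict_mono r" and lim: "((\<lambda>k. q_star Phi R (lam k) (y k)) \<circ> r) \<longlonglongrightarrow> l"
  show "l = q_F Phi R ybar"
  proof (rule sym,
      rule dual_sol_limit_eq_q_F[OF assms(1) _ _ _ _ lim, where lam = "lam \<circ> r" and y = "y \<circ> r"])
    show "(\<lambda>j. norm ((y \<circ> r) j - ybar) / (lam \<circ> r) j) \<longlonglongrightarrow> 0"
      using LIMSEQ_subseq_LIMSEQ[OF assms(7) r] by (simp add: comp_def)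
    show "(lam \<circ> r) \<longlonglongrightarrow> 0" using LIMSEQ_subseq_LIMSEQ[OF assms(8) r] .
  qed (use sol assms(6) in auto)
qed

end
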